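(* Let $\mathcal H=\mathbb C^2$ with basis $I=\{|0\rangle,|1\rangle\}$ (the $\sigma_z$ eigenbasis), and let $\rho=\frac12(\mathbb 1+n_x\sigma_x+n_y\sigma_y+n_z\sigma_z)$ be any qubit density matrix ($n_x^2+n_y^2+n_z^2\le1$). Define $C_z(\rho)=\sqrt{n_x^2+n_y^2}$. Then $$R_I(\rho)=h\!\left(\frac{1+\sqrt{1-C_z(\rho)^2}}{2}\right),$$ where $h(p)=-p\log_2p-(1-p)\log_2(1-p)$ is the binary entropy. Moreover $C_z(\rho)=|\sqrt{\eta_1}-\sqrt{\eta_2}|$, where $\eta_1,\eta_2$ are the eigenvalues of $\rho\,\sigma_x\rho^*\sigma_x$ ($\rho^*$ the entrywise complex conjugate in basis $I$), and $C_z(\rho)=C_{l_1}(\rho):=|\langle0|\rho|1\rangle|+|\langle1|\rho|0\rangle|$.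
   Context: $\sigma_x,\sigma_y,\sigma_z$ are the Pauli matrices. For a density matrix $\rho$, let $\rho^{\mathrm{diag}}=\sum_i\langle i|\rho|i\rangle\,|i\rangle\langle i|$. For a pure state $|\psi\rangle=\sum_ia_i|i\rangle$ define $R_I(|\psi\rangle)=S\big((|\psi\rangle\langle\psi|)^{\mathrm{diag}}\big)=-\sum_i|a_i|^2\log_2|a_i|^2$, where $S$ is the von Neumann entropy. For a general density matrix $\rho$ define $R_I(\rho)=\min\sum_ep_eR_I(|\psi_e\rangle)$, the minimum over all finite pure-state decompositions $\rho=\sum_ep_e|\psi_e\rangle\langle\psi_e|$ with $p_e>0$, $\sum_ep_e=1$. *)

theory Defs
  imports "Jordan_Normal_Form.Char_Poly"
begin

definition sigma_x :: "complex mat" where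
  "sigma_x = mat_of_rows_list 2 [[0, 1], [1, 0]]"
definition sigma_y :: "complex mat" where
  "sigma_y = mat_of_rows_list 2 [[0, -\<i>], [\<i>, 0]]"
definition sigma_z :: "complex mat" where
  "sigma_z = mat_of_rows_list 2 [[1, 0], [0, -1]]"

definition bloch_state :: "real \<Rightarrow> real \<Rightarrow> real \<Rightarrow> complex mat" where
  "bloch_state nx ny nz =
     (1/2 :: complex) \<cdot>\<^sub>m (1\<^sub>m 2 + complex_of_real nx \<cdot>\<^sub>m sigma_x
        + complex_of_real ny \<cdot>\<^sub>m sigma_y + complex_of_real nz \<cdot>\<^sub>m sigma_z)"

definition ent_term :: "real \<Rightarrow> real" where
  "ent_term t = (if t = 0 then 0 else - t * log 2 t)"

definition bin_entropy :: "real \<Rightarrow> real" where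
  "bin_entropy p = ent_term p + ent_term (1 - p)"

text \<open>R_I of a pure state |psi> = sum_i a_i |i> (in dimension n):
  von Neumann entropy of the dephased state = - sum_i |a_i|^2 log2 |a_i|^2.\<close>
definition RI_pure :: "nat \<Rightarrow> complex vec \<Rightarrow> real" where
  "RI_pure n \<psi> = (\<Sum>i<n. ent_term ((cmod (\<psi> $ i))\<^sup>2))"

definition unit_state :: "nat \<Rightarrow> complex vec \<Rightarrow> bool" where
  "unit_state n \<psi> \<longleftrightarrow> \<psi> \<in> carrier_vec n \<and> (\<Sum>i<n. (cmod (\<psi> $ i))\<^sup>2) = 1"

definition pure_decomp :: "complex mat \<Rightarrow> nat \<Rightarrow> (nat \<Rightarrow> real) \<Rightarrow> (nat \<Rightarrow> complex vec) \<Rightarrow> bool" where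
  "pure_decomp \<rho> m p \<psi> \<longleftrightarrow>
     (\<forall>e<m. p e > 0 \<and> unit_state (dim_row \<rho>) (\<psi> e)) \<and> (\<Sum>e<m. p e) = 1 \<and>
     \<rho> = mat (dim_row \<rho>) (dim_row \<rho>)
            (\<lambda>(i, j). \<Sum>e<m. complex_of_real (p e) * \<psi> e $ i * cnj (\<psi> e $ j))"

definition RI :: "complex mat \<Rightarrow> real" where
  "RI \<rho> = Inf {(\<Sum>e<m. p e * RI_pure (dim_row \<rho>) (\<psi> e)) | m p \<psi>. pure_decomp \<rho> m p \<psi>}"

definition C_z :: "real \<Rightarrow> real \<Rightarrow> real" where
  "C_z nx ny = sqrt (nx\<^sup>2 + ny\<^sup>2)"

definition C_l1 :: "complex mat \<Rightarrow> real" where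
  "C_l1 \<rho> = cmod (\<rho> $$ (0, 1)) + cmod (\<rho> $$ (1, 0))"

end

theory Submission
  imports Defs "HOL-Real_Asymp.Real_Asymp"
begin

text \<open>A pure qubit with amplitudes \<open>a\<^sub>0, a\<^sub>1\<close> has \<open>R\<^sub>I = h(|a\<^sub>0|\<^sup>2)\<close>, which depends only on
  its coherence \<open>C = 2|a\<^sub>0 a\<^sub>1|\<close>, through \<open>F(C) = h((1 + \<surd>(1 - C\<^sup>2))/2)\<close>. The function \<open>F\<close> is
  increasing and convex on \<open>[0,1]\<close>, and coherence is subadditive on mixtures:
  \<open>2|\<rho>\<^sub>0\<^sub>1| \<le> \<Sum> p\<^sub>e C\<^sub>e\<close>. By Jensen every pure-state decomposition therefore has average
  \<open>R\<^sub>I \<ge> F(2|\<rho>\<^sub>0\<^sub>1|) = F(C\<^sub>z)\<close>, and the bound is attained by splitting the Bloch vector into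
  at most two pure states that share its transverse part and have \<open>z\<close>-components
  \<open>\<plusminus>\<surd>(1 - C\<^sub>z\<^sup>2)\<close>. Convexity of \<open>F\<close> is obtained through supporting lines, which in the
  variable \<open>s = \<surd>(1 - C\<^sup>2)\<close> reduce to the monotonicity of \<open>\<surd>(1 - s\<^sup>2) artanh s / s\<close>.
  For the last two claims one computes that \<open>\<rho> \<sigma>\<^sub>x \<rho>\<^sup>* \<sigma>\<^sub>x\<close> has eigenvalues
  \<open>((r \<plusminus> C\<^sub>z)/2)\<^sup>2\<close> with \<open>r = \<surd>(1 - n\<^sub>z\<^sup>2) \<ge> C\<^sub>z\<close>, and that \<open>|\<rho>\<^sub>0\<^sub>1| = |\<rho>\<^sub>1\<^sub>0| = C\<^sub>z/2\<close>.\<close>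

lemma ent_term_eq: "ent_term = (\<lambda>t. - (t * ln t) / ln 2)"
  by (auto simp: ent_term_def log_def)

lemma continuous_on_ent_term: "continuous_on {0..} ent_term"
proof -
  have "continuous (at t within {0..}) (\<lambda>t. t * ln t)" if "t \<ge> 0" for t :: real
  proof (cases "t = 0")
    case True
    have "((\<lambda>t::real. t * ln t) \<longlongrightarrow> 0) (at_right 0)" by real_asymp
    then show ?thesis using True by (simp add: continuous_within at_within_Ici_at_right)
  next
    case False
    then show ?thesis using that by (intro continuous_intros) auto
  qed
  then have "continuous_on {0..} (\<lambda>t::real. t * ln t)"
    by (simp add: continuous_on_eq_continuous_within)
  then show ?thesis
    unfolding ent_term_eq by (auto intro!: continuous_on_divide continuous_on_minus)
qed

lemma ent_term_has_real_derivative: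
  "0 < t \<Longrightarrow> (ent_term has_real_derivative - (ln t + 1) / ln 2) (at t)"
  unfolding ent_term_eq by (auto intro!: derivative_eq_intros simp: field_simps)

lemma bin_entropy_half_has_real_derivative:
  assumes "\<bar>s\<bar> < 1"
  shows "((\<lambda>s. bin_entropy ((1 + s) / 2)) has_real_derivative - artanh s / ln 2) (at s)"
proof -
  have pos: "0 < (1 + s) / 2" "0 < (1 - s) / 2" using assms by auto
  have "((\<lambda>s. ent_term ((1 + s) / 2) + ent_term ((1 - s) / 2)) has_real_derivative
      - (ln ((1 + s) / 2) + 1) / ln 2 * (1 / 2) + - (ln ((1 - s) / 2) + 1) / ln 2 * (- 1 / 2)) (at s)"
    by (intro DERIV_add DERIV_chain2[OF ent_term_has_real_derivative] pos)
       (auto intro!: derivative_eq_intros)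
  moreover have "ln ((1 + s) / 2) = ln ((1 - s) / 2) + 2 * artanh s"
    unfolding artanh_def using pos by (simp add: ln_div field_simps)
  ultimately show ?thesis
    by (simp add: bin_entropy_def add_divide_distrib diff_divide_distrib algebra_simps)
qed

lemma le_artanh:
  fixes x :: real
  assumes "0 \<le> x" "x < 1"
  shows "x \<le> artanh x"
proof -
  have "(\<lambda>y. artanh y - y) 0 \<le> (\<lambda>y. artanh y - y) x"
  proof (rule DERIV_nonneg_imp_increasing_open[OF assms(1)])
    fix y :: real assume y: "0 < y" "y < x"
    then have "y^2 < 1" using assms by (simp add: abs_square_less_1)
    then have "0 \<le> 1 / (1 - y^2) - 1" by (simp add: le_divide_eq)
    moreover have "((\<lambda>y. artanh y - y) has_real_derivative 1 / (1 - y^2) - 1) (at y)"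
      using y assms by (auto intro!: derivative_eq_intros)
    ultimately show "\<exists>d. ((\<lambda>y. artanh y - y) has_real_derivative d) (at y) \<and> 0 \<le> d" by blast
  qed (use assms in \<open>intro continuous_intros; auto\<close>)
  then show ?thesis by simp
qed

lemma sqrt_one_minus_square_has_real_derivative:
  fixes s :: real
  assumes "\<bar>s\<bar> < 1"
  shows "((\<lambda>s. sqrt (1 - s^2)) has_real_derivative - s / sqrt (1 - s^2)) (at s)"
proof -
  have "0 < 1 - s^2" using assms by (simp add: abs_square_less_1)
  then show ?thesis by (auto intro!: derivative_eq_intros simp: field_simps)
qed

text \<open>This ratio compares the derivatives of \<open>s \<mapsto> h((1 + s)/2)\<close> and \<open>s \<mapsto> \<surd>(1 - s\<^sup>2)\<close>;
  its monotonicity is what makes the tangent inequality below hold.\<close>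
lemma artanh_slope_ratio_antimono:
  fixes s t :: real
  assumes "0 < s" "s \<le> t" "t < 1"
  shows "sqrt (1 - t^2) * artanh t / t \<le> sqrt (1 - s^2) * artanh s / s"
proof (rule DERIV_nonpos_imp_decreasing_open[OF assms(2), of "\<lambda>x. sqrt (1 - x^2) * artanh x / x"])
  fix x assume x: "s < x" "x < t"
  then have x01: "0 < x" "x < 1" "\<bar>x\<bar> < 1" using assms by auto
  define K where "K = sqrt (1 - x^2)"
  have "x^2 < 1" using x01 by (simp add: abs_square_less_1)
  then have K: "0 < K" "K * K = 1 - x^2" by (auto simp: K_def)
  have "((\<lambda>x. sqrt (1 - x^2) * artanh x / x) has_real_derivative
      ((- x / K * artanh x + 1 / (1 - x^2) * K) * x - K * artanh x * 1) / (x * x)) (at x)"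
    unfolding K_def using x01
    by (intro DERIV_divide DERIV_mult sqrt_one_minus_square_has_real_derivative
        artanh_real_has_field_derivative DERIV_ident) auto
  moreover have "((- x / K * artanh x + 1 / (1 - x^2) * K) * x - K * artanh x * 1) / (x * x)
      = (x - artanh x) / (x^2 * K)"
  proof -
    have inv: "1 / (1 - x^2) * K = 1 / K"
      unfolding K(2)[symmetric] using K by (simp add: field_simps)
    have "(- x / K * artanh x + 1 / (1 - x^2) * K) * x - K * artanh x * 1
        = (- x * x * artanh x + x - K * K * artanh x) / K"
      unfolding inv using K by (simp add: field_simps)
    also have "\<dots> = (x - artanh x) / K"
      unfolding K(2) by (simp add: field_simps power2_eq_square)
    finally have numerator: "(- x / K * artanh x + 1 / (1 - x^2) * K) * x - K * artanh x * 1
        = (x - artanh x) / K" .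
    show ?thesis
      unfolding numerator using K x01 by (simp add: field_simps power2_eq_square)
  qed
  moreover have "(x - artanh x) / (x^2 * K) \<le> 0"
    using le_artanh[of x] x01 K by (simp add: divide_nonpos_pos)
  ultimately show "\<exists>d. ((\<lambda>x. sqrt (1 - x^2) * artanh x / x) has_real_derivative d) (at x) \<and> d \<le> 0"
    by auto
next
  show "continuous_on {s..t} (\<lambda>x. sqrt (1 - x^2) * artanh x / x)"
    using assms by (intro continuous_intros) auto
qed

lemma bin_entropy_half_tangent:
  fixes s0 s :: real
  defines "B \<equiv> sqrt (1 - s0^2) * artanh s0 / (s0 * ln 2)"
  assumes "0 < s0" "s0 < 1" "0 \<le> s" "s \<le> 1"
  shows "bin_entropy ((1 + s0) / 2) - B * sqrt (1 - s0^2)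
    \<le> bin_entropy ((1 + s) / 2) - B * sqrt (1 - s^2)"
proof -
  define u where "u x = sqrt (1 - x^2) * artanh x / x" for x :: real
  define \<Phi> where "\<Phi> x = bin_entropy ((1 + x) / 2) - B * sqrt (1 - x^2)" for x
  have \<Phi>_deriv: "(\<Phi> has_real_derivative (u s0 - u x) * (x / (sqrt (1 - x^2) * ln 2))) (at x)"
    and factor_pos: "0 < x / (sqrt (1 - x^2) * ln 2)"
    if "0 < x" "x < 1" for x
  proof -
    have "x^2 < 1" using that by (simp add: abs_square_less_1)
    then have K: "0 < sqrt (1 - x^2)" by simp
    then show "0 < x / (sqrt (1 - x^2) * ln 2)" using that by simp
    have "(\<Phi> has_real_derivative - artanh x / ln 2 - B * (- x / sqrt (1 - x^2))) (at x)"
      unfolding \<Phi>_def using that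
      by (intro DERIV_diff DERIV_cmult bin_entropy_half_has_real_derivative
          sqrt_one_minus_square_has_real_derivative) auto
    moreover have "B = u s0 / ln 2" "artanh x = u x * x / sqrt (1 - x^2)"
      unfolding B_def u_def using that K by (auto simp: field_simps)
    ultimately show "(\<Phi> has_real_derivative (u s0 - u x) * (x / (sqrt (1 - x^2) * ln 2))) (at x)"
      using K by (simp add: field_simps)
  qed
  have \<Phi>_cont: "continuous_on {a..b} \<Phi>" if "0 \<le> a" "b \<le> 1" for a b
  proof -
    have "continuous_on {a..b} (\<lambda>x. ent_term ((1 + x) / 2))"
      using that by (intro continuous_on_compose2[OF continuous_on_ent_term] continuous_intros) auto
    moreover have "continuous_on {a..b} (\<lambda>x. ent_term (1 - (1 + x) / 2))"
      using that by (intro continuous_on_compose2[OF continuous_on_ent_term] continuous_intros) auto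
    ultimately show ?thesis
      unfolding \<Phi>_def bin_entropy_def by (intro continuous_intros)
  qed
  show ?thesis
  proof (cases "s \<le> s0")
    case True
    have "\<Phi> s0 \<le> \<Phi> s"
    proof (rule DERIV_nonpos_imp_decreasing_open[OF True])
      fix x assume x: "s < x" "x < s0"
      then have "u s0 \<le> u x"
        unfolding u_def using assms by (intro artanh_slope_ratio_antimono) auto
      moreover have "0 < x" "x < 1" using x assms by auto
      ultimately have "(u s0 - u x) * (x / (sqrt (1 - x^2) * ln 2)) \<le> 0"
        using less_imp_le[OF factor_pos] by (intro mult_nonpos_nonneg) auto
      then show "\<exists>d. (\<Phi> has_real_derivative d) (at x) \<and> d \<le> 0"
        using \<Phi>_deriv[OF \<open>0 < x\<close> \<open>x < 1\<close>] by blast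
    qed (use assms \<Phi>_cont in auto)
    then show ?thesis unfolding \<Phi>_def .
  next
    case False
    have "\<Phi> s0 \<le> \<Phi> s"
    proof (rule DERIV_nonneg_imp_increasing_open[of s0 s \<Phi>])
      fix x assume x: "s0 < x" "x < s"
      then have "u x \<le> u s0"
        unfolding u_def using assms by (intro artanh_slope_ratio_antimono) auto
      moreover have "0 < x" "x < 1" using x assms by auto
      ultimately have "0 \<le> (u s0 - u x) * (x / (sqrt (1 - x^2) * ln 2))"
        using less_imp_le[OF factor_pos] by (intro mult_nonneg_nonneg) auto
      then show "\<exists>d. (\<Phi> has_real_derivative d) (at x) \<and> 0 \<le> d"
        using \<Phi>_deriv[OF \<open>0 < x\<close> \<open>x < 1\<close>] by blast
    qed (use False assms \<Phi>_cont in auto)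
    then show ?thesis unfolding \<Phi>_def .
  qed
qed

text \<open>The function \<open>F\<close>: the value of \<open>R\<^sub>I\<close> on a pure qubit with \<open>l\<^sub>1\<close>-coherence \<open>C\<close>.\<close>
definition coherence_entropy :: "real \<Rightarrow> real" where
  "coherence_entropy c = bin_entropy ((1 + sqrt (1 - c^2)) / 2)"

lemma bin_entropy_one_minus: "bin_entropy (1 - p) = bin_entropy p"
  by (simp add: bin_entropy_def)

lemma ent_term_nonneg: "0 \<le> t \<Longrightarrow> t \<le> 1 \<Longrightarrow> 0 \<le> ent_term t"
  unfolding ent_term_def by (auto simp: mult_nonneg_nonpos)

lemma bin_entropy_nonneg: "0 \<le> p \<Longrightarrow> p \<le> 1 \<Longrightarrow> 0 \<le> bin_entropy p"
  unfolding bin_entropy_def by (simp add: ent_term_nonneg)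

lemma coherence_entropy_nonneg:
  assumes "0 \<le> c" "c \<le> 1"
  shows "0 \<le> coherence_entropy c"
proof -
  have "c^2 \<le> 1" using assms by (simp add: power_le_one)
  then show ?thesis unfolding coherence_entropy_def by (intro bin_entropy_nonneg) auto
qed

lemma bin_entropy_eq_coherence_entropy:
  assumes "0 \<le> q" "q \<le> 1"
  shows "bin_entropy q = coherence_entropy (2 * sqrt (q * (1 - q)))"
proof -
  have "(2 * sqrt (q * (1 - q)))^2 = 4 * (q * (1 - q))"
    using assms by (simp add: power_mult_distrib)
  then have "sqrt (1 - (2 * sqrt (q * (1 - q)))^2) = \<bar>2 * q - 1\<bar>"
    by (simp add: power2_eq_square algebra_simps flip: real_sqrt_abs)
  then have "(1 + sqrt (1 - (2 * sqrt (q * (1 - q)))^2)) / 2 = q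
      \<or> (1 + sqrt (1 - (2 * sqrt (q * (1 - q)))^2)) / 2 = 1 - q"
    by auto
  then show ?thesis
    unfolding coherence_entropy_def by (metis bin_entropy_one_minus)
qed

lemma coherence_entropy_supporting_line:
  fixes c :: real
  assumes "0 \<le> c" "c < 1"
  obtains B where "0 \<le> B"
    "\<And>C. 0 \<le> C \<Longrightarrow> C \<le> 1 \<Longrightarrow> coherence_entropy c - B * c \<le> coherence_entropy C - B * C"
proof (cases "c = 0")
  case True
  then show ?thesis
    using that[of 0] coherence_entropy_nonneg
    by (simp add: coherence_entropy_def bin_entropy_def ent_term_def)
next
  case False
  define s0 where "s0 = sqrt (1 - c^2)"
  have "c^2 < 1" using assms by (simp add: power_less_one_iff)
  then have s0: "0 < s0" "s0 < 1" "sqrt (1 - s0^2) = c"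
    using assms False by (auto simp: s0_def)
  define B where "B = sqrt (1 - s0^2) * artanh s0 / (s0 * ln 2)"
  have "0 \<le> B"
    unfolding B_def using s0 le_artanh[of s0] assms(1)
    by (intro divide_nonneg_pos mult_nonneg_nonneg) auto
  moreover have "coherence_entropy c - B * c \<le> coherence_entropy C - B * C"
    if "0 \<le> C" "C \<le> 1" for C
  proof -
    define s where "s = sqrt (1 - C^2)"
    have "C^2 \<le> 1" using that by (simp add: power_le_one)
    then have "0 \<le> s" "s \<le> 1" "sqrt (1 - s^2) = C" using that by (auto simp: s_def)
    then show ?thesis
      using bin_entropy_half_tangent[of s0 s] s0
      unfolding coherence_entropy_def B_def s0_def s_def by simp
  qed
  ultimately show ?thesis by (rule that)
qed

text \<open>At \<open>c = 1\<close> the supporting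
  line would be vertical, so there all \<open>C e\<close> with positive weight are forced to equal 1.\<close>
lemma coherence_entropy_le_mean:
  fixes p C :: "'a \<Rightarrow> real"
  assumes "finite E" "(\<Sum>e\<in>E. p e) = 1" "\<And>e. e \<in> E \<Longrightarrow> 0 \<le> p e"
    and "\<And>e. e \<in> E \<Longrightarrow> 0 \<le> C e \<and> C e \<le> 1"
    and "0 \<le> c" "c \<le> (\<Sum>e\<in>E. p e * C e)"
  shows "coherence_entropy c \<le> (\<Sum>e\<in>E. p e * coherence_entropy (C e))"
proof (cases "c < 1")
  case True
  obtain B where B: "0 \<le> B" and tangent:
    "\<And>C. 0 \<le> C \<Longrightarrow> C \<le> 1 \<Longrightarrow> coherence_entropy c - B * c \<le> coherence_entropy C - B * C"
    using coherence_entropy_supporting_line[OF assms(5) True] by blast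
  have "coherence_entropy c - B * c = (\<Sum>e\<in>E. p e * (coherence_entropy c - B * c))"
    using assms(2) by (simp flip: sum_distrib_right)
  also have "\<dots> \<le> (\<Sum>e\<in>E. p e * (coherence_entropy (C e) - B * C e))"
    using assms tangent by (intro sum_mono mult_left_mono) auto
  also have "\<dots> = (\<Sum>e\<in>E. p e * coherence_entropy (C e)) - B * (\<Sum>e\<in>E. p e * C e)"
    by (simp add: sum_subtractf right_diff_distrib sum_distrib_left algebra_simps)
  finally show ?thesis using mult_left_mono[OF assms(6) B] by linarith
next
  case False
  have "(\<Sum>e\<in>E. p e * C e) \<le> (\<Sum>e\<in>E. p e)"
    using assms by (intro sum_mono mult_left_le) auto
  then have c1: "c = 1" using False assms(2,6) by linarith
  have "(\<Sum>e\<in>E. p e * (1 - C e)) = 0"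
    using assms c1 \<open>(\<Sum>e\<in>E. p e * C e) \<le> (\<Sum>e\<in>E. p e)\<close>
    by (simp add: sum_subtractf right_diff_distrib)
  then have "\<forall>e\<in>E. p e * (1 - C e) = 0"
    by (rule sum_nonneg_eq_0_iff[OF assms(1), THEN iffD1, rotated])
      (use assms in \<open>auto intro: mult_nonneg_nonneg\<close>)
  then have "(\<Sum>e\<in>E. p e * coherence_entropy (C e)) = (\<Sum>e\<in>E. p e * coherence_entropy 1)"
    by (intro sum.cong) auto
  also have "\<dots> = coherence_entropy c" using assms(2) c1 by (simp flip: sum_distrib_right)
  finally show ?thesis by simp
qed

definition mat2 :: "'a \<Rightarrow> 'a \<Rightarrow> 'a \<Rightarrow> 'a \<Rightarrow> 'a mat" where
  "mat2 a b c d = mat 2 2 (\<lambda>(i, j). if i = 0 then if j = 0 then a else b else if j = 0 then c else d)"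

lemma mat2_carrier [simp]: "mat2 a b c d \<in> carrier_mat 2 2"
  and dim_row_mat2 [simp]: "dim_row (mat2 a b c d) = 2"
  and dim_col_mat2 [simp]: "dim_col (mat2 a b c d) = 2"
  by (auto simp: mat2_def)

text \<open>Stated with \<open>Suc 0\<close>, the simp normal form of \<open>1 :: nat\<close>.\<close>
lemma index_mat2 [simp]:
  "mat2 a b c d $$ (0, 0) = a" "mat2 a b c d $$ (0, Suc 0) = b"
  "mat2 a b c d $$ (Suc 0, 0) = c" "mat2 a b c d $$ (Suc 0, Suc 0) = d"
  by (auto simp: mat2_def)

lemma mat2_eqI:
  assumes "A \<in> carrier_mat 2 2" "A $$ (0, 0) = a" "A $$ (0, 1) = b" "A $$ (1, 0) = c" "A $$ (1, 1) = d"
  shows "A = mat2 a b c d"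
proof (rule eq_matI)
  fix i j assume "i < dim_row (mat2 a b c d)" "j < dim_col (mat2 a b c d)"
  then have "i = 0 \<or> i = 1" "j = 0 \<or> j = 1" by auto
  then show "A $$ (i, j) = mat2 a b c d $$ (i, j)" using assms by auto
qed (use assms in auto)

lemma mat_of_rows_list_mat2: "mat_of_rows_list 2 [[a, b], [c, d]] = mat2 a b c d"
  by (rule mat2_eqI) (auto simp: mat_of_rows_list_def)

lemma one_mat2: "(1\<^sub>m 2 :: 'a :: comm_ring_1 mat) = mat2 1 0 0 1"
  by (rule mat2_eqI) auto

lemma mat2_add: "mat2 a b c d + mat2 e f g h = mat2 (a + e) (b + f) (c + g) (d + h)"
  by (rule mat2_eqI) auto

lemma smult_mat2: "k \<cdot>\<^sub>m mat2 a b c d = mat2 (k * a) (k * b) (k * c) (k * d)"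
  by (rule mat2_eqI) auto

lemma map_mat_mat2: "map_mat f (mat2 a b c d) = mat2 (f a) (f b) (f c) (f d)"
  by (rule mat2_eqI) auto

lemma mat2_mult:
  "mat2 a b c d * mat2 e f g h =
    mat2 (a * e + b * g) (a * f + b * h) (c * e + d * g) (c * f + d * h :: 'a :: comm_ring_1)"
  by (rule mat2_eqI) (auto simp: scalar_prod_def numeral_2_eq_2)

lemma det_mat2: "det (mat2 a b c d) = a * d - b * (c :: 'a :: comm_ring_1)"
proof -
  let ?A = "mat2 a b c d"
  have "det ?A = (\<Sum>i<2. ?A $$ (i, 0) * cofactor ?A i 0)"
    by (rule laplace_expansion_column) auto
  moreover have "cofactor ?A 0 0 = d" "cofactor ?A 1 0 = - b"
    unfolding cofactor_def by (subst det_single; auto simp: mat_delete_def)+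
  ultimately show ?thesis by (simp add: numeral_2_eq_2 algebra_simps)
qed

lemma char_poly_mat2: "char_poly (mat2 a b c d) = [:a * d - b * c, - (a + d), 1 :: 'a :: comm_ring_1:]"
  by (simp add: char_poly_def char_poly_matrix_def one_mat2 smult_mat2 map_mat_mat2 mat2_add
      det_mat2 algebra_simps)

lemma linear_factors_mult: "[:- a, 1:] * [:- b, 1:] = [:a * b, - (a + b), 1 :: 'a :: comm_ring_1:]"
  by (simp add: algebra_simps)

lemma linear_factors_unique:
  fixes a b x y :: "'a :: idom"
  assumes "[:- a, 1:] * [:- b, 1:] = [:- x, 1:] * [:- y, 1:]"
  shows "a = x \<and> b = y \<or> a = y \<and> b = x"
proof -
  have "poly ([:- a, 1:] * [:- b, 1:]) a = poly ([:- x, 1:] * [:- y, 1:]) a"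
    using assms by (rule arg_cong)
  then have "poly [:- a, 1:] a * poly [:- b, 1:] a = poly [:- x, 1:] a * poly [:- y, 1:] a"
    by (simp only: poly_mult)
  then have "a = x \<or> a = y" by simp
  then show ?thesis
  proof
    assume "a = x"
    then have "[:- b, 1:] = [:- y, 1:]" using assms by simp
    then show ?thesis using \<open>a = x\<close> by simp
  next
    assume "a = y"
    then have "[:- y, 1:] * [:- b, 1:] = [:- y, 1:] * [:- x, 1:]"
      using assms by (simp add: mult.commute)
    then show ?thesis using \<open>a = y\<close> by simp
  qed
qed

lemma char_poly_hermitian_mat2_sigma_x:
  fixes \<alpha> \<delta> :: real and w :: complex
  assumes "0 \<le> \<alpha>" "0 \<le> \<delta>"
  defines "g \<equiv> sqrt (\<alpha> * \<delta>)"
    and "\<rho> \<equiv> mat2 (of_real \<alpha>) w (cnj w) (of_real \<delta>)"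
  shows "char_poly (\<rho> * mat2 0 1 1 0 * map_mat cnj \<rho> * mat2 0 1 1 0)
    = [:- of_real ((g + cmod w)^2), 1:] * [:- of_real ((g - cmod w)^2), 1:]"
proof -
  have w: "w * cnj w = of_real ((cmod w)^2)" "cnj w * w = of_real ((cmod w)^2)"
    by (metis complex_norm_square, metis complex_norm_square mult.commute)
  have "char_poly (\<rho> * mat2 0 1 1 0 * map_mat cnj \<rho> * mat2 0 1 1 0)
      = [:of_real ((\<alpha> * \<delta> - (cmod w)^2)^2), - of_real (2 * (\<alpha> * \<delta> + (cmod w)^2)), 1:]"
    unfolding \<rho>_def map_mat_mat2 mat2_mult char_poly_mat2
    by (simp add: w algebra_simps power2_eq_square)
  moreover have "g^2 = \<alpha> * \<delta>" using assms by (simp add: g_def)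
  then have "(g + cmod w)^2 * (g - cmod w)^2 = (\<alpha> * \<delta> - (cmod w)^2)^2"
      "(g + cmod w)^2 + (g - cmod w)^2 = 2 * (\<alpha> * \<delta> + (cmod w)^2)"
    by (simp_all flip: power_mult_distrib add: algebra_simps power2_eq_square)
  then have "[:- of_real ((g + cmod w)^2), 1:] * [:- of_real ((g - cmod w)^2), 1:]
      = [:of_real ((\<alpha> * \<delta> - (cmod w)^2)^2), - of_real (2 * (\<alpha> * \<delta> + (cmod w)^2)), 1 :: complex:]"
    unfolding linear_factors_mult of_real_mult[symmetric] of_real_add[symmetric] by simp
  ultimately show ?thesis by simp
qed

lemma bloch_state_mat2:
  "bloch_state nx ny nz =
    mat2 (of_real ((1 + nz) / 2)) (cnj (Complex nx ny) / 2) (Complex nx ny / 2) (of_real ((1 - nz) / 2))"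
proof -
  have "Complex nx ny = of_real nx + of_real ny * \<i>" "cnj (Complex nx ny) = of_real nx - of_real ny * \<i>"
    by (simp_all add: complex_eq_iff)
  then show ?thesis
    unfolding bloch_state_def sigma_x_def sigma_y_def sigma_z_def mat_of_rows_list_mat2 one_mat2
      smult_mat2 mat2_add
    by (simp add: algebra_simps add_divide_distrib diff_divide_distrib)
qed

lemma C_z_eq_cmod: "C_z nx ny = cmod (Complex nx ny)"
  by (simp add: C_z_def norm_complex_def)

lemma C_z_eq_C_l1: "C_z nx ny = C_l1 (bloch_state nx ny nz)"
  unfolding C_l1_def bloch_state_mat2 C_z_eq_cmod
  by (simp only: index_mat2 One_nat_def norm_divide complex_mod_cnj) simp

lemma bloch_state_sigma_x_eigenvalues:
  assumes "nx^2 + ny^2 + nz^2 \<le> 1"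
    and "char_poly (bloch_state nx ny nz * sigma_x * map_mat cnj (bloch_state nx ny nz) * sigma_x)
      = [:- \<eta>1, 1:] * [:- \<eta>2, 1:]"
  shows "\<eta>1 \<in> \<real> \<and> \<eta>2 \<in> \<real> \<and> Re \<eta>1 \<ge> 0 \<and> Re \<eta>2 \<ge> 0 \<and>
    C_z nx ny = \<bar>sqrt (Re \<eta>1) - sqrt (Re \<eta>2)\<bar>"
proof -
  define c r where "c = C_z nx ny" and "r = sqrt (1 - nz^2)"
  have "nx^2 + ny^2 \<le> 1 - nz^2" using assms(1) by simp
  moreover have "0 \<le> nx^2 + ny^2" by simp
  ultimately have "nz^2 \<le> 1" by linarith
  have "0 \<le> c" "c \<le> r"
    using \<open>nx^2 + ny^2 \<le> 1 - nz^2\<close> by (auto simp: c_def r_def C_z_def intro!: real_sqrt_le_mono)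
  have g: "sqrt ((1 + nz) / 2 * ((1 - nz) / 2)) = r / 2"
    by (simp add: r_def real_sqrt_divide algebra_simps power2_eq_square)
  define a b where "a = (r / 2 + c / 2)^2" and "b = (r / 2 - c / 2)^2"
  have "cmod (cnj (Complex nx ny) / 2) = c / 2"
    unfolding c_def C_z_eq_cmod by (simp only: norm_divide complex_mod_cnj) simp
  then have "[:- \<eta>1, 1:] * [:- \<eta>2, 1:] = [:- of_real a, 1:] * [:- of_real b, 1:]"
    using char_poly_hermitian_mat2_sigma_x[of "(1 + nz) / 2" "(1 - nz) / 2" "cnj (Complex nx ny) / 2"]
      \<open>nz^2 \<le> 1\<close>
    unfolding assms(2)[symmetric] bloch_state_mat2 sigma_x_def mat_of_rows_list_mat2 g a_def b_def
    by (simp add: abs_square_le_1)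
  then have "\<eta>1 = of_real a \<and> \<eta>2 = of_real b \<or> \<eta>1 = of_real b \<and> \<eta>2 = of_real a"
    by (rule linear_factors_unique)
  moreover have "0 \<le> a" "0 \<le> b" "\<bar>sqrt a - sqrt b\<bar> = c" "\<bar>sqrt b - sqrt a\<bar> = c"
    using \<open>0 \<le> c\<close> \<open>c \<le> r\<close> by (simp_all add: a_def b_def)
  ultimately show ?thesis
    unfolding c_def by auto
qed

lemma sum_lessThan_2: "(\<Sum>i<2. f i) = f 0 + f (1 :: nat)"
  by (simp add: numeral_2_eq_2)

lemma RI_pure_qubit:
  assumes "unit_state 2 \<psi>"
  shows "RI_pure 2 \<psi> = coherence_entropy (2 * cmod (\<psi> $ 0) * cmod (\<psi> $ 1))"
proof -
  define q where "q = (cmod (\<psi> $ 0))^2"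
  have norm1: "(cmod (\<psi> $ 1))^2 = 1 - q"
    using assms by (simp add: unit_state_def sum_lessThan_2 q_def)
  then have "0 \<le> q" "q \<le> 1"
    using zero_le_power2[of "cmod (\<psi> $ 1)"] by (auto simp: q_def)
  moreover have "2 * cmod (\<psi> $ 0) * cmod (\<psi> $ 1) = 2 * sqrt (q * (1 - q))"
    unfolding norm1[symmetric] unfolding q_def by (simp add: real_sqrt_mult)
  moreover have "RI_pure 2 \<psi> = bin_entropy q"
    unfolding RI_pure_def sum_lessThan_2 bin_entropy_def norm1 by (simp add: q_def)
  ultimately show ?thesis by (simp add: bin_entropy_eq_coherence_entropy mult.assoc)
qed

lemma coherence_entropy_le_pure_decomp:
  assumes "dim_row \<rho> = 2" "pure_decomp \<rho> m p \<psi>"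
  shows "coherence_entropy (2 * cmod (\<rho> $$ (0, 1))) \<le> (\<Sum>e<m. p e * RI_pure 2 (\<psi> e))"
proof -
  define C where "C e = 2 * cmod (\<psi> e $ 0) * cmod (\<psi> e $ 1)" for e
  have p: "\<And>e. e < m \<Longrightarrow> 0 < p e" and unit: "\<And>e. e < m \<Longrightarrow> unit_state 2 (\<psi> e)"
    and "(\<Sum>e<m. p e) = 1"
    and \<rho>: "\<rho> = mat 2 2 (\<lambda>(i, j). \<Sum>e<m. complex_of_real (p e) * \<psi> e $ i * cnj (\<psi> e $ j))"
    using assms unfolding pure_decomp_def by auto
  have C: "0 \<le> C e \<and> C e \<le> 1" if "e < m" for e
  proof -
    have "(cmod (\<psi> e $ 0))^2 + (cmod (\<psi> e $ 1))^2 = 1"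
      using unit[OF that] by (simp add: unit_state_def sum_lessThan_2)
    then show ?thesis
      using sum_squares_bound[of "cmod (\<psi> e $ 0)" "cmod (\<psi> e $ 1)"] by (simp add: C_def)
  qed
  have "2 * cmod (\<rho> $$ (0, 1)) = 2 * cmod (\<Sum>e<m. complex_of_real (p e) * \<psi> e $ 0 * cnj (\<psi> e $ 1))"
    by (subst \<rho>) simp
  also have "\<dots> \<le> 2 * (\<Sum>e<m. cmod (complex_of_real (p e) * \<psi> e $ 0 * cnj (\<psi> e $ 1)))"
    by (simp add: norm_sum)
  also have "\<dots> = (\<Sum>e<m. p e * C e)"
    using p by (simp add: sum_distrib_left C_def norm_mult less_imp_le algebra_simps)
  finally have "coherence_entropy (2 * cmod (\<rho> $$ (0, 1))) \<le> (\<Sum>e<m. p e * coherence_entropy (C e))"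
    using p C \<open>(\<Sum>e<m. p e) = 1\<close> by (intro coherence_entropy_le_mean) (auto intro: less_imp_le)
  also have "\<dots> = (\<Sum>e<m. p e * RI_pure 2 (\<psi> e))"
    using unit by (simp add: RI_pure_qubit C_def)
  finally show ?thesis .
qed

text \<open>The pure qubit whose Bloch vector has \<open>z\<close>-component \<open>z\<close> and transverse direction \<open>\<phi>\<close>.\<close>
definition qubit_state :: "real \<Rightarrow> complex \<Rightarrow> complex vec" where
  "qubit_state z \<phi> =
    vec 2 (\<lambda>i. if i = 0 then of_real (sqrt ((1 + z) / 2)) else of_real (sqrt ((1 - z) / 2)) * \<phi>)"

lemma qubit_state_index [simp]:
  "qubit_state z \<phi> $ 0 = of_real (sqrt ((1 + z) / 2))"
  "qubit_state z \<phi> $ Suc 0 = of_real (sqrt ((1 - z) / 2)) * \<phi>"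
  by (simp_all add: qubit_state_def)

lemma unit_state_qubit_state:
  assumes "\<bar>z\<bar> \<le> 1" "cmod \<phi> = 1"
  shows "unit_state 2 (qubit_state z \<phi>)"
  using assms by (simp add: unit_state_def sum_lessThan_2 norm_mult qubit_state_def
      flip: add_divide_distrib)

lemma sqrt_half_plus_times_sqrt_half_minus:
  "\<bar>z\<bar> \<le> 1 \<Longrightarrow> sqrt ((1 + z) / 2) * sqrt ((1 - z) / 2) = sqrt (1 - z^2) / 2"
  by (simp add: real_sqrt_divide flip: real_sqrt_mult) (simp add: algebra_simps power2_eq_square)

lemma RI_pure_qubit_state:
  assumes "\<bar>z\<bar> \<le> 1" "cmod \<phi> = 1"
  shows "RI_pure 2 (qubit_state z \<phi>) = coherence_entropy (sqrt (1 - z^2))"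
proof -
  have norms: "cmod (qubit_state z \<phi> $ 0) = sqrt ((1 + z) / 2)"
    "cmod (qubit_state z \<phi> $ 1) = sqrt ((1 - z) / 2)"
    using assms by (simp_all add: norm_mult)
  have "RI_pure 2 (qubit_state z \<phi>) = coherence_entropy (2 * (sqrt ((1 + z) / 2) * sqrt ((1 - z) / 2)))"
    unfolding norms[symmetric] mult.assoc[symmetric]
    by (rule RI_pure_qubit[OF unit_state_qubit_state[OF assms]])
  then show ?thesis
    unfolding sqrt_half_plus_times_sqrt_half_minus[OF assms(1)] by simp
qed

lemma qubit_state_outer:
  assumes "\<bar>z\<bar> \<le> 1" "cmod \<phi> = 1"
  shows "qubit_state z \<phi> $ 0 * cnj (qubit_state z \<phi> $ 0) = of_real ((1 + z) / 2)"
    "qubit_state z \<phi> $ 0 * cnj (qubit_state z \<phi> $ 1) = of_real (sqrt (1 - z^2) / 2) * cnj \<phi>"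
    "qubit_state z \<phi> $ 1 * cnj (qubit_state z \<phi> $ 0) = of_real (sqrt (1 - z^2) / 2) * \<phi>"
    "qubit_state z \<phi> $ 1 * cnj (qubit_state z \<phi> $ 1) = of_real ((1 - z) / 2)"
proof -
  have "\<phi> * cnj \<phi> = 1" using assms(2) by (metis complex_norm_square of_real_1 power_one)
  then show "qubit_state z \<phi> $ 1 * cnj (qubit_state z \<phi> $ 1) = of_real ((1 - z) / 2)"
    using assms(1) by (simp add: mult_ac flip: of_real_mult)
  show "qubit_state z \<phi> $ 0 * cnj (qubit_state z \<phi> $ 0) = of_real ((1 + z) / 2)"
    using assms(1) by (simp flip: of_real_mult)
  have prod: "of_real (sqrt ((1 + z) / 2)) * of_real (sqrt ((1 - z) / 2))
      = (of_real (sqrt (1 - z^2) / 2) :: complex)"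
    unfolding of_real_mult[symmetric] sqrt_half_plus_times_sqrt_half_minus[OF assms(1)] ..
  show "qubit_state z \<phi> $ 0 * cnj (qubit_state z \<phi> $ 1) = of_real (sqrt (1 - z^2) / 2) * cnj \<phi>"
    "qubit_state z \<phi> $ 1 * cnj (qubit_state z \<phi> $ 0) = of_real (sqrt (1 - z^2) / 2) * \<phi>"
    unfolding prod[symmetric] by (simp_all add: mult_ac)
qed

lemma dim_row_bloch_state: "dim_row (bloch_state nx ny nz) = 2"
  by (simp add: bloch_state_mat2)

lemma pure_decomp_bloch_state_qubit_states:
  assumes p: "\<And>e. e < m \<Longrightarrow> 0 < p e" "(\<Sum>e<m. p e) = 1" "(\<Sum>e<m. p e * z e) = nz"
    and z: "\<And>e. e < m \<Longrightarrow> \<bar>z e\<bar> = s" "s \<le> 1"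
    and \<phi>: "cmod \<phi> = 1" "of_real (sqrt (1 - s^2)) * \<phi> = Complex nx ny"
  shows "pure_decomp (bloch_state nx ny nz) m p (\<lambda>e. qubit_state (z e) \<phi>)"
proof -
  define \<psi> where "\<psi> e = qubit_state (z e) \<phi>" for e
  let ?S = "\<lambda>i j. \<Sum>e<m. complex_of_real (p e) * \<psi> e $ i * cnj (\<psi> e $ j)"
  have zb: "\<bar>z e\<bar> \<le> 1" and zs: "(z e)^2 = s^2" if "e \<in> {..<m}" for e
    using z(1)[of e] z(2) that by (simp_all, metis power2_abs)
  note outer = qubit_state_outer[OF zb \<phi>(1), unfolded One_nat_def]
  have "?S 0 0 = of_real (\<Sum>e<m. p e * ((1 + z e) / 2))"
    unfolding of_real_sum \<psi>_def
    by (intro sum.cong refl) (simp only: mult.assoc outer of_real_mult)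
  also have "(\<Sum>e<m. p e * ((1 + z e) / 2)) = (1 + nz) / 2"
    using p by (simp add: ring_distribs sum.distrib flip: sum_divide_distrib)
  finally have S00: "?S 0 0 = of_real ((1 + nz) / 2)" .
  have "?S (Suc 0) (Suc 0) = of_real (\<Sum>e<m. p e * ((1 - z e) / 2))"
    unfolding of_real_sum \<psi>_def
    by (intro sum.cong refl) (simp only: mult.assoc outer of_real_mult)
  also have "(\<Sum>e<m. p e * ((1 - z e) / 2)) = (1 - nz) / 2"
    using p by (simp add: ring_distribs sum_subtractf flip: sum_divide_distrib)
  finally have S11: "?S (Suc 0) (Suc 0) = of_real ((1 - nz) / 2)" .
  have "?S 0 (Suc 0) = of_real (\<Sum>e<m. p e) * (of_real (sqrt (1 - s^2)) * cnj \<phi>) / 2"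
    unfolding of_real_sum sum_distrib_right sum_divide_distrib \<psi>_def
    by (intro sum.cong refl) (simp only: mult.assoc outer zs, simp)
  then have S01: "?S 0 (Suc 0) = cnj (Complex nx ny) / 2"
    using arg_cong[OF \<phi>(2), of cnj] p(2) by simp
  have "?S (Suc 0) 0 = of_real (\<Sum>e<m. p e) * (of_real (sqrt (1 - s^2)) * \<phi>) / 2"
    unfolding of_real_sum sum_distrib_right sum_divide_distrib \<psi>_def
    by (intro sum.cong refl) (simp only: mult.assoc outer zs, simp)
  then have S10: "?S (Suc 0) 0 = Complex nx ny / 2"
    using \<phi>(2) p(2) by simp
  have "bloch_state nx ny nz = mat 2 2 (\<lambda>(i, j). ?S i j)"
    unfolding bloch_state_mat2 by (rule mat2_eqI[symmetric]) (simp_all add: S00 S01 S10 S11)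
  moreover have "\<forall>e<m. 0 < p e \<and> unit_state 2 (\<psi> e)"
    unfolding \<psi>_def using p z \<phi> by (auto intro!: unit_state_qubit_state)
  ultimately have "pure_decomp (bloch_state nx ny nz) m p \<psi>"
    unfolding pure_decomp_def dim_row_bloch_state using p(2) by blast
  then show ?thesis by (simp only: \<psi>_def[abs_def])
qed

lemma bloch_state_optimal_decomp:
  assumes "nx^2 + ny^2 + nz^2 \<le> 1"
  obtains m p \<psi> where "pure_decomp (bloch_state nx ny nz) m p \<psi>"
    "(\<Sum>e<m. p e * RI_pure 2 (\<psi> e)) = coherence_entropy (C_z nx ny)"
proof -
  define c s \<phi> where "c = C_z nx ny" and "s = sqrt (1 - c^2)"
    and "\<phi> = (if c = 0 then 1 else Complex nx ny / of_real c)"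
  have c: "0 \<le> c" "c^2 = nx^2 + ny^2" "cmod (Complex nx ny) = c"
    by (simp_all add: c_def C_z_def flip: C_z_eq_cmod)
  have "c^2 \<le> 1 - nz^2" using assms c(2) by simp
  moreover have "0 \<le> nz^2" by simp
  ultimately have "c^2 \<le> 1" "nz^2 \<le> 1 - c^2" by linarith+
  moreover from this(2) have "sqrt (nz^2) \<le> s"
    unfolding s_def by (rule real_sqrt_le_mono)
  ultimately have s: "\<bar>nz\<bar> \<le> s" "s \<le> 1" "sqrt (1 - s^2) = c"
    using c(1) by (simp_all add: s_def)
  have \<phi>: "cmod \<phi> = 1" "of_real (sqrt (1 - s^2)) * \<phi> = Complex nx ny"
    using c s(3) by (auto simp: \<phi>_def norm_divide)
  have mean_RI: "(\<Sum>e<m. p e * RI_pure 2 (qubit_state (z e) \<phi>)) = coherence_entropy c"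
    if z: "\<And>e. e < m \<Longrightarrow> \<bar>z e\<bar> = s" and p: "(\<Sum>e<m. p e) = 1" for m p z
  proof -
    have "RI_pure 2 (qubit_state (z e) \<phi>) = coherence_entropy c" if "e < m" for e
    proof -
      have "(z e)^2 = s^2" using z[OF that] by (metis power2_abs)
      then show ?thesis
        using RI_pure_qubit_state[of "z e" \<phi>] z[OF that] s(2,3) \<phi>(1) by simp
    qed
    then have "(\<Sum>e<m. p e * RI_pure 2 (qubit_state (z e) \<phi>)) = (\<Sum>e<m. p e * coherence_entropy c)"
      by (intro sum.cong) auto
    also have "\<dots> = coherence_entropy c"
      using p by (simp flip: sum_distrib_right)
    finally show ?thesis .
  qed
  show ?thesis
  proof (cases "\<bar>nz\<bar> = s")
    case True
    show ?thesis
    proof (rule that)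
      show "pure_decomp (bloch_state nx ny nz) 1 (\<lambda>_. 1) (\<lambda>_. qubit_state nz \<phi>)"
        using True s(2) \<phi>
        by (intro pure_decomp_bloch_state_qubit_states[where z = "\<lambda>_. nz" and s = s]) simp_all
      have "(\<Sum>e<(1::nat). 1 * RI_pure 2 (qubit_state nz \<phi>)) = coherence_entropy c"
        by (rule mean_RI) (use True in auto)
      then show "(\<Sum>e<(1::nat). 1 * RI_pure 2 (qubit_state nz \<phi>)) = coherence_entropy (C_z nx ny)"
        by (simp only: c_def)
    qed
  next
    case False
    then have "\<bar>nz\<bar> < s" "0 < s" using s(1) by auto
    then have bounds: "- 1 < nz / s" "nz / s < 1" by (auto simp: field_simps abs_less_iff)
    define p z where "p e = (if e = 0 then (1 + nz / s) / 2 else (1 - nz / s) / 2)"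
      and "z e = (if e = 0 then s else - s)" for e :: nat
    have p_pos: "0 < p e" for e
      using bounds by (auto simp: p_def)
    have "(\<Sum>e<2. p e) = 1" "(\<Sum>e<2. p e * z e) = nz" "\<And>e. \<bar>z e\<bar> = s"
      using \<open>0 < s\<close> by (auto simp: sum_lessThan_2 p_def z_def field_simps)
    show ?thesis
    proof (rule that)
      show "pure_decomp (bloch_state nx ny nz) 2 p (\<lambda>e. qubit_state (z e) \<phi>)"
        using p_pos \<open>(\<Sum>e<2. p e) = 1\<close> \<open>(\<Sum>e<2. p e * z e) = nz\<close> \<open>\<And>e. \<bar>z e\<bar> = s\<close> s(2) \<phi>
        by (intro pure_decomp_bloch_state_qubit_states[where s = s]) simp_all
      have "(\<Sum>e<2. p e * RI_pure 2 (qubit_state (z e) \<phi>)) = coherence_entropy c"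
        by (rule mean_RI) (use \<open>(\<Sum>e<2. p e) = 1\<close> \<open>\<And>e. \<bar>z e\<bar> = s\<close> in auto)
      then show "(\<Sum>e<2. p e * RI_pure 2 (qubit_state (z e) \<phi>)) = coherence_entropy (C_z nx ny)"
        by (simp only: c_def)
    qed
  qed
qed

lemma RI_bloch_state:
  assumes "nx^2 + ny^2 + nz^2 \<le> 1"
  shows "RI (bloch_state nx ny nz) = coherence_entropy (C_z nx ny)"
proof -
  let ?D = "{\<Sum>e<m. p e * RI_pure 2 (\<psi> e) | m p \<psi>. pure_decomp (bloch_state nx ny nz) m p \<psi>}"
  obtain m p \<psi> where "pure_decomp (bloch_state nx ny nz) m p \<psi>"
    "(\<Sum>e<m. p e * RI_pure 2 (\<psi> e)) = coherence_entropy (C_z nx ny)"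
    using bloch_state_optimal_decomp[OF assms] .
  then have "coherence_entropy (C_z nx ny) \<in> ?D" by force
  moreover have "coherence_entropy (C_z nx ny) \<le> x" if x_in: "x \<in> ?D" for x
  proof -
    obtain m p \<psi> where x: "x = (\<Sum>e<m. p e * RI_pure 2 (\<psi> e))"
      and decomp: "pure_decomp (bloch_state nx ny nz) m p \<psi>"
      using x_in by blast
    have "2 * cmod (bloch_state nx ny nz $$ (0, 1)) = C_z nx ny"
      unfolding bloch_state_mat2 C_z_eq_cmod
      by (simp only: index_mat2 One_nat_def norm_divide complex_mod_cnj) simp
    then show ?thesis
      using coherence_entropy_le_pure_decomp[OF dim_row_bloch_state decomp] x by simp
  qed
  ultimately show ?thesis
    unfolding RI_def dim_row_bloch_state by (intro cInf_eq_minimum)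
qed

theorem mainTheorem7:
  fixes nx ny nz :: real
  assumes "nx\<^sup>2 + ny\<^sup>2 + nz\<^sup>2 \<le> 1"
  shows "RI (bloch_state nx ny nz) = bin_entropy ((1 + sqrt (1 - (C_z nx ny)\<^sup>2)) / 2)
    \<and> (\<forall>\<eta>1 \<eta>2. char_poly (bloch_state nx ny nz * sigma_x * map_mat cnj (bloch_state nx ny nz) * sigma_x)
                 = [:- \<eta>1, 1:] * [:- \<eta>2, 1:] \<longrightarrow>
          \<eta>1 \<in> \<real> \<and> \<eta>2 \<in> \<real> \<and> Re \<eta>1 \<ge> 0 \<and> Re \<eta>2 \<ge> 0 \<and>
          C_z nx ny = \<bar>sqrt (Re \<eta>1) - sqrt (Re \<eta>2)\<bar>)
    \<and> C_z nx ny = C_l1 (bloch_state nx ny nz)"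
  using RI_bloch_state[OF assms] bloch_state_sigma_x_eigenvalues[OF assms] C_z_eq_C_l1
  unfolding coherence_entropy_def by blast

end
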